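(* Let $S$ be $\mathbb{R}$ or $\mathbb{C}$ and $\epsilon>0$. For each $m$, let $\boldsymbol{\varepsilon}$ denote the constant vector $(\epsilon,\dots,\epsilon)$ of length $m-1$ when used in $\mathbf{CP}^{\boldsymbol{\varepsilon}}_m(S)$. Then for all $n\in\mathbb{N}$, $$g\big[\mathbf{CP}_n(S)\big]\ \ge\ \frac{g\big[\mathbf{CP}^{\boldsymbol{\varepsilon}}_n(S)\big]}{1+\epsilon(2+\epsilon)\,g\big[\mathbf{CP}^{\boldsymbol{\varepsilon}}_{n-1}(S)\big]+\epsilon\sum_{i=1}^{n-2}g\big[\mathbf{CP}^{\boldsymbol{\varepsilon}}_i(S)\big]}.$$
   Context: For an $n\times n$ complex matrix $A=(a_{i,j})$, Gaussian elimination without pivoting is the recursion $a^{(1)}_{i,j}=a_{i,j}$ and $a^{(k+1)}_{i,j}=a^{(k)}_{i,j}-a^{(k)}_{i,k}a^{(k)}_{k,j}/a^{(k)}_{k,k}$ for $k+1\le i,j\le n$, $k=1,\dots,n-1$ (defined when all pivots are nonzero). Growth factor: $g(A)=\max_{i,j,k}|a^{(k)}_{i,j}|/\max_{i,j}|a_{i,j}|$; for a set $\mathbf{X}$ of matrices, $g[\mathbf{X}]=\sup_{A\in\mathbf{X}}g(A)$. $\mathbf{CP}_n(S)$ is the set of invertible $A\in S^{n\times n}$ for which elimination is defined and $|a^{(k)}_{i,j}|\le|a^{(k)}_{k,k}|$ for all $k$ and $i,j\ge k$. For $\boldsymbol{\varepsilon}=(\varepsilon_1,\dots,\varepsilon_{n-1})$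 with $\varepsilon_i>-1$, $\mathbf{CP}^{\boldsymbol{\varepsilon}}_n(S)$ is the set of invertible $A\in S^{n\times n}$ for which elimination is defined and $|a^{(k)}_{i,j}|\le(1+\varepsilon_k)|a^{(k)}_{k,k}|$ for all $k\le n-1$ and $i,j\ge k$, $(i,j)\neq(k,k)$. *)

theory Defs
  imports "HOL-Analysis.Analysis" "HOL-Library.Extended_Real"
begin

text \<open>An n x n complex matrix is a function nat => nat => complex, indices 1..n,
  with entries outside {1..n} x {1..n} equal to 0.  Real matrices are those
  with all entries in the reals (as a subset of the complex numbers).\<close>

definition mat_in :: "nat \<Rightarrow> complex set \<Rightarrow> (nat \<Rightarrow> nat \<Rightarrow> complex) \<Rightarrow> bool" where
  "mat_in n S A \<longleftrightarrow> (\<forall>i j. (i \<in> {1..n} \<and> j \<in> {1..n} \<longrightarrow> A i j \<in> S)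
                              \<and> (\<not> (i \<in> {1..n} \<and> j \<in> {1..n}) \<longrightarrow> A i j = 0))"

definition mat_invertible :: "nat \<Rightarrow> (nat \<Rightarrow> nat \<Rightarrow> complex) \<Rightarrow> bool" where
  "mat_invertible n A \<longleftrightarrow> (\<exists>B. \<forall>i\<in>{1..n}. \<forall>j\<in>{1..n}.
      (\<Sum>l=1..n. A i l * B l j) = (if i = j then 1 else 0))"

text \<open>Gaussian elimination without pivoting: ge A k i j is a^(k)_{i,j}.\<close>
fun ge :: "(nat \<Rightarrow> nat \<Rightarrow> complex) \<Rightarrow> nat \<Rightarrow> nat \<Rightarrow> nat \<Rightarrow> complex" where
  "ge A 0 i j = A i j"
| "ge A (Suc 0) i j = A i j"
| "ge A (Suc (Suc k)) i j =
     ge A (Suc k) i j - ge A (Suc k) i (Suc k) * ge A (Suc k) (Suc k) j / ge A (Suc k) (Suc k) (Suc k)"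

definition elim_defined :: "nat \<Rightarrow> (nat \<Rightarrow> nat \<Rightarrow> complex) \<Rightarrow> bool" where
  "elim_defined n A \<longleftrightarrow> (\<forall>k\<in>{1..n-1}. ge A k k k \<noteq> 0)"

definition growth :: "nat \<Rightarrow> (nat \<Rightarrow> nat \<Rightarrow> complex) \<Rightarrow> real" where
  "growth n A = (if n = 0 then 1 else
     Max {cmod (ge A k i j) | k i j. k \<in> {1..n} \<and> i \<in> {k..n} \<and> j \<in> {k..n}}
     / Max {cmod (A i j) | i j. i \<in> {1..n} \<and> j \<in> {1..n}})"

definition CP :: "nat \<Rightarrow> complex set \<Rightarrow> (nat \<Rightarrow> nat \<Rightarrow> complex) set" where
  "CP n S = {A. mat_in n S A \<and> mat_invertible n A \<and> elim_defined n A \<and>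
     (\<forall>k\<in>{1..n}. \<forall>i\<in>{k..n}. \<forall>j\<in>{k..n}. cmod (ge A k i j) \<le> cmod (ge A k k k))}"

definition CPeps :: "nat \<Rightarrow> (nat \<Rightarrow> real) \<Rightarrow> complex set \<Rightarrow> (nat \<Rightarrow> nat \<Rightarrow> complex) set" where
  "CPeps n eps S = {A. mat_in n S A \<and> mat_invertible n A \<and> elim_defined n A \<and>
     (\<forall>k\<in>{1..n-1}. \<forall>i\<in>{k..n}. \<forall>j\<in>{k..n}. (i, j) \<noteq> (k, k) \<longrightarrow>
        cmod (ge A k i j) \<le> (1 + eps k) * cmod (ge A k k k))}"

definition gset :: "nat \<Rightarrow> (nat \<Rightarrow> nat \<Rightarrow> complex) set \<Rightarrow> ereal" where
  "gset n X = (SUP A\<in>X. ereal (growth n A))"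

end

theory Submission
  imports Defs "Jordan_Normal_Form.Determinant"
begin

text \<open>Let \<open>A\<close> be in \<open>CP\<^sup>\<epsilon>\<^sub>n\<close> with pivots \<open>p\<^sub>k\<close>. Multiplying the \<open>k\<close>-th pivot by \<open>\<alpha>\<^sub>k\<^sup>2\<close>
  and the rest of the \<open>k\<close>-th row and column of the \<open>k\<close>-th elimination stage by \<open>\<alpha>\<^sub>k\<close> leaves
  the Schur complement unchanged, so this is achieved by adding one fixed matrix to \<open>A\<close>,
  giving a matrix \<open>B\<close> whose stages are those of \<open>A\<close> plus that matrix. Choosing
  \<open>|p\<^sub>k| \<alpha>\<^sub>k\<^sup>2 = |p\<^sub>k| + y\<^sub>k\<close> with \<open>y\<^sub>k = \<epsilon> \<Sum>\<^bsub>l\<ge>k\<^esub> |p\<^sub>l| + \<epsilon>(1+\<epsilon>) max\<^sub>l |p\<^sub>l|\<close> makes every pivot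
  of \<open>B\<close> dominate its stage, so \<open>B \<in> CP\<^sub>n\<close>; its pivots also dominate all stage entries
  of \<open>A\<close>, and its entries exceed those of \<open>A\<close> by at most \<open>y\<^sub>1\<close>. Hence
  \<open>g(A) \<le> (1 + y\<^sub>1 / max |a\<^sub>i\<^sub>j|) g(B)\<close>. Finally \<open>|p\<^sub>l|\<close> is at most the growth factor of the leading
  \<open>l \<times> l\<close> submatrix of \<open>A\<close>, which lies in \<open>CP\<^sup>\<epsilon>\<^sub>l\<close>, times \<open>max |a\<^sub>i\<^sub>j|\<close>.\<close>

lemma ge_Suc: "1 \<le> k \<Longrightarrow> ge A (Suc k) i j = ge A k i j - ge A k i k * ge A k k j / ge A k k k"
  by (cases k) auto

lemma ge_in_Reals: "(\<And>i j. A i j \<in> \<real>) \<Longrightarrow> ge A k i j \<in> \<real>"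
  by (induction A k i j rule: ge.induct) auto

lemma mat_in_entry: "mat_in n S A \<Longrightarrow> 0 \<in> S \<Longrightarrow> A i j \<in> S"
  unfolding mat_in_def by metis

definition lead_submatrix :: "nat \<Rightarrow> (nat \<Rightarrow> nat \<Rightarrow> complex) \<Rightarrow> nat \<Rightarrow> nat \<Rightarrow> complex" where
  "lead_submatrix l A i j = (if i \<le> l \<and> j \<le> l then A i j else 0)"

lemma ge_lead_submatrix:
  "k \<le> l \<Longrightarrow> i \<le> l \<Longrightarrow> j \<le> l \<Longrightarrow> ge (lead_submatrix l A) k i j = ge A k i j"
  by (induction A k i j rule: ge.induct) (auto simp: lead_submatrix_def)

definition id_matrix :: "nat \<Rightarrow> nat \<Rightarrow> nat \<Rightarrow> complex" where
  "id_matrix m i j = (if i = j \<and> i \<in> {1..m} then 1 else 0)"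

lemma ge_id_matrix: "1 \<le> k \<Longrightarrow> k \<le> i \<Longrightarrow> k \<le> j \<Longrightarrow> ge (id_matrix m) k i j = id_matrix m i j"
  by (induction "id_matrix m" k i j rule: ge.induct) (auto simp: id_matrix_def)

subsection \<open>Invertibility and the pivots\<close>

definition to_mat :: "nat \<Rightarrow> (nat \<Rightarrow> nat \<Rightarrow> complex) \<Rightarrow> complex mat" where
  "to_mat n C = Matrix.mat n n (\<lambda>(i, j). C (Suc i) (Suc j))"

lemma to_mat_carrier [simp]: "to_mat n C \<in> carrier_mat n n"
  by (simp add: to_mat_def)

lemma to_mat_dim [simp]: "dim_row (to_mat n C) = n" "dim_col (to_mat n C) = n"
  by (simp_all add: to_mat_def)

lemma to_mat_index [simp]: "i < n \<Longrightarrow> j < n \<Longrightarrow> to_mat n C $$ (i, j) = C (Suc i) (Suc j)"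
  by (simp add: to_mat_def)

lemma sum_atLeast1_atMost_shift: "(\<Sum>l=1..n. f l) = (\<Sum>k<n. f (Suc k))"
  using sum.atLeast1_atMost_eq[of f n] by simp

lemma to_mat_mult_index:
  assumes "Y \<in> carrier_mat n n" "i < n" "j < n"
  shows "(to_mat n X * Y) $$ (i, j) = (\<Sum>l=1..n. X (Suc i) l * Y $$ (l - 1, j))"
  using assms unfolding sum_atLeast1_atMost_shift
  by (auto simp: scalar_prod_def lessThan_atLeast0 intro!: sum.cong)

lemma to_mat_mult_to_mat_index:
  "i < n \<Longrightarrow> j < n \<Longrightarrow> (to_mat n X * to_mat n Y) $$ (i, j) = (\<Sum>l=1..n. X (Suc i) l * Y l (Suc j))"
  using to_mat_mult_index[OF to_mat_carrier, of i n j X Y] unfolding sum_atLeast1_atMost_shift by simp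

lemma mat_invertible_iff_det_nonzero: "mat_invertible n C \<longleftrightarrow> det (to_mat n C) \<noteq> 0"
proof
  assume "mat_invertible n C"
  then obtain B where B: "\<forall>i\<in>{1..n}. \<forall>j\<in>{1..n}. (\<Sum>l=1..n. C i l * B l j) = (if i = j then 1 else 0)"
    unfolding mat_invertible_def by blast
  have "to_mat n C * to_mat n B = 1\<^sub>m n"
    by (rule eq_matI) (use B to_mat_mult_to_mat_index in auto)
  then have "det (to_mat n C) * det (to_mat n B) = 1"
    using det_mult[OF to_mat_carrier to_mat_carrier, of n C B] by simp
  then show "det (to_mat n C) \<noteq> 0" by auto
next
  assume det: "det (to_mat n C) \<noteq> 0"
  define X where "X = (1 / det (to_mat n C)) \<cdot>\<^sub>m adj_mat (to_mat n C)"
  have X: "X \<in> carrier_mat n n" using adj_mat(1)[OF to_mat_carrier] by (simp add: X_def)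
  have "to_mat n C * X = (1 / det (to_mat n C)) \<cdot>\<^sub>m (to_mat n C * adj_mat (to_mat n C))"
    unfolding X_def by (rule mult_smult_distrib[OF to_mat_carrier adj_mat(1)[OF to_mat_carrier]])
  also have "\<dots> = 1\<^sub>m n"
    using adj_mat(2)[OF to_mat_carrier, of n C] det by (auto intro!: eq_matI)
  finally have inverse: "to_mat n C * X = 1\<^sub>m n" .
  show "mat_invertible n C" unfolding mat_invertible_def
  proof (intro exI[of _ "\<lambda>l j. X $$ (l - 1, j - 1)"] ballI)
    fix i j assume ij: "i \<in> {1..n}" "j \<in> {1..n}"
    then have "(i - 1 = j - 1) = (i = j)" by auto
    then show "(\<Sum>l=1..n. C i l * X $$ (l - 1, j - 1)) = (if i = j then 1 else 0)"
      using to_mat_mult_index[OF X, of "i - 1" "j - 1" C] inverse ij by (auto simp del: index_mult_mat)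
  qed
qed

definition lu_lower :: "(nat \<Rightarrow> nat \<Rightarrow> complex) \<Rightarrow> nat \<Rightarrow> nat \<Rightarrow> complex" where
  "lu_lower C i k = (if k = i then 1 else if k < i then ge C k i k / ge C k k k else 0)"

definition lu_upper :: "(nat \<Rightarrow> nat \<Rightarrow> complex) \<Rightarrow> nat \<Rightarrow> nat \<Rightarrow> complex" where
  "lu_upper C k j = (if k \<le> j then ge C k k j else 0)"

lemma entry_eq_sum_elimination_updates:
  "1 \<le> m \<Longrightarrow> m \<le> i \<Longrightarrow> m \<le> j \<Longrightarrow>
     C i j = (\<Sum>l=1..<m. ge C l i l * ge C l l j / ge C l l l) + ge C m i j"
proof (induction m)
  case (Suc m)
  then show ?case by (cases "m = 0") (auto simp: ge_Suc)
qed simp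

lemma entry_eq_lu_product:
  assumes "elim_defined n C" "i \<in> {1..n}" "j \<in> {1..n}"
  shows "C i j = (\<Sum>l=1..n. lu_lower C i l * lu_upper C l j)"
proof -
  define m where "m = min i j"
  have m: "1 \<le> m" "m \<le> i" "m \<le> j" "m \<le> n" using assms by (auto simp: m_def)
  have "(\<Sum>l=1..n. lu_lower C i l * lu_upper C l j) = (\<Sum>l=1..m. lu_lower C i l * lu_upper C l j)"
    by (rule sum.mono_neutral_right) (use assms in \<open>auto simp: lu_lower_def lu_upper_def m_def\<close>)
  also have "\<dots> = (\<Sum>l=1..<m. lu_lower C i l * lu_upper C l j) + lu_lower C i m * lu_upper C m j"
    using m by (simp add: atLeastLessThanSuc_atLeastAtMost[symmetric])
  also have "(\<Sum>l=1..<m. lu_lower C i l * lu_upper C l j) = (\<Sum>l=1..<m. ge C l i l * ge C l l j / ge C l l l)"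
    using m by (intro sum.cong) (auto simp: lu_lower_def lu_upper_def)
  also have "lu_lower C i m * lu_upper C m j = ge C m i j"
  proof (cases "i \<le> j")
    case False
    then have "ge C j j j \<noteq> 0" using assms by (auto simp: elim_defined_def)
    then show ?thesis using False by (simp add: m_def lu_lower_def lu_upper_def)
  qed (simp add: m_def lu_lower_def lu_upper_def)
  finally show ?thesis using entry_eq_sum_elimination_updates[OF m(1-3)] by simp
qed

lemma to_mat_eq_lu:
  assumes "elim_defined n C"
  shows "to_mat n C = to_mat n (lu_lower C) * to_mat n (lu_upper C)"
proof (rule eq_matI)
  fix i j assume "i < dim_row (to_mat n (lu_lower C) * to_mat n (lu_upper C))"
    "j < dim_col (to_mat n (lu_lower C) * to_mat n (lu_upper C))"
  then show "to_mat n C $$ (i, j) = (to_mat n (lu_lower C) * to_mat n (lu_upper C)) $$ (i, j)"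
    using entry_eq_lu_product[OF assms, of "Suc i" "Suc j"]
      to_mat_mult_to_mat_index[of i n j "lu_lower C" "lu_upper C"] by simp
qed auto

lemma det_to_mat_eq_prod_pivots:
  assumes "elim_defined n C"
  shows "det (to_mat n C) = (\<Prod>k=1..n. ge C k k k)"
proof -
  have "det (to_mat n (lu_lower C)) = 1"
    by (subst det_lower_triangular[of n]) (auto simp: lu_lower_def prod_list_diag_prod)
  moreover have "det (to_mat n (lu_upper C)) = (\<Prod>k=1..n. ge C k k k)"
    by (subst det_upper_triangular[of _ n])
       (auto simp: lu_upper_def upper_triangular_def prod_list_diag_prod prod.atLeast1_atMost_eq
             atLeast0LessThan)
  ultimately show ?thesis
    unfolding to_mat_eq_lu[OF assms] det_mult[OF to_mat_carrier to_mat_carrier] by simp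
qed

lemma mat_invertible_iff_pivots_nonzero:
  "elim_defined n C \<Longrightarrow> mat_invertible n C \<longleftrightarrow> (\<forall>k\<in>{1..n}. ge C k k k \<noteq> 0)"
  by (simp add: mat_invertible_iff_det_nonzero det_to_mat_eq_prod_pivots)

lemma elim_definedI: "(\<And>k. k \<in> {1..n} \<Longrightarrow> ge C k k k \<noteq> 0) \<Longrightarrow> elim_defined n C"
  by (auto simp: elim_defined_def)

subsection \<open>Growth factors\<close>

definition stage_norms :: "(nat \<Rightarrow> nat \<Rightarrow> complex) \<Rightarrow> nat \<Rightarrow> real set" where
  "stage_norms C m = {cmod (ge C k i j) | k i j. k \<in> {1..m} \<and> i \<in> {k..m} \<and> j \<in> {k..m}}"

definition entry_norms :: "(nat \<Rightarrow> nat \<Rightarrow> complex) \<Rightarrow> nat \<Rightarrow> real set" where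
  "entry_norms C m = {cmod (C i j) | i j. i \<in> {1..m} \<and> j \<in> {1..m}}"

lemma finite_stage_norms: "finite (stage_norms C m)"
proof -
  have "stage_norms C m \<subseteq> (\<lambda>(k, i, j). cmod (ge C k i j)) ` ({1..m} \<times> {1..m} \<times> {1..m})"
    unfolding stage_norms_def by (auto intro!: image_eqI[where x="(_, _, _)"])
  then show ?thesis by (rule finite_subset) simp
qed

lemma finite_entry_norms: "finite (entry_norms C m)"
proof -
  have "entry_norms C m \<subseteq> (\<lambda>(i, j). cmod (C i j)) ` ({1..m} \<times> {1..m})"
    unfolding entry_norms_def by (auto simp: image_iff)
  then show ?thesis by (rule finite_subset) simp
qed

lemma stage_norm_le_Max:
  "k \<in> {1..m} \<Longrightarrow> i \<in> {k..m} \<Longrightarrow> j \<in> {k..m} \<Longrightarrow> cmod (ge C k i j) \<le> Max (stage_norms C m)"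
  by (rule Max_ge[OF finite_stage_norms]) (unfold stage_norms_def, blast)

lemma entry_norm_le_Max: "i \<in> {1..m} \<Longrightarrow> j \<in> {1..m} \<Longrightarrow> cmod (C i j) \<le> Max (entry_norms C m)"
  by (rule Max_ge[OF finite_entry_norms]) (auto simp: entry_norms_def)

lemma Max_stage_norms_le:
  assumes "m \<ge> 1" "\<And>k i j. k \<in> {1..m} \<Longrightarrow> i \<in> {k..m} \<Longrightarrow> j \<in> {k..m} \<Longrightarrow> cmod (ge C k i j) \<le> b"
  shows "Max (stage_norms C m) \<le> b"
proof -
  have "stage_norms C m \<noteq> {}" using assms(1) by (auto simp: stage_norms_def)
  then show ?thesis using finite_stage_norms assms(2) by (subst Max_le_iff) (auto simp: stage_norms_def)
qed

lemma Max_entry_norms_le: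
  assumes "m \<ge> 1" "\<And>i j. i \<in> {1..m} \<Longrightarrow> j \<in> {1..m} \<Longrightarrow> cmod (C i j) \<le> b"
  shows "Max (entry_norms C m) \<le> b"
proof -
  have "entry_norms C m \<noteq> {}" using assms(1) by (auto simp: entry_norms_def)
  then show ?thesis using finite_entry_norms assms(2) by (subst Max_le_iff) (auto simp: entry_norms_def)
qed

lemma growth_eq: "m \<ge> 1 \<Longrightarrow> growth m C = Max (stage_norms C m) / Max (entry_norms C m)"
  unfolding growth_def stage_norms_def entry_norms_def by simp

lemma Max_stage_norms_nonneg: "m \<ge> 1 \<Longrightarrow> 0 \<le> Max (stage_norms C m)"
  by (rule order_trans[OF norm_ge_zero stage_norm_le_Max]) auto

lemma Max_entry_norms_nonneg: "m \<ge> 1 \<Longrightarrow> 0 \<le> Max (entry_norms C m)"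
  by (rule order_trans[OF norm_ge_zero entry_norm_le_Max]) auto

lemma growth_nonneg: "0 \<le> growth m C"
proof (cases "m = 0")
  case False
  then show ?thesis
    by (simp add: growth_eq Max_stage_norms_nonneg Max_entry_norms_nonneg)
qed (simp add: growth_def)

lemma stage_norm_le_growth:
  assumes "k \<in> {1..m}" "i \<in> {k..m}" "j \<in> {k..m}" "Max (entry_norms C m) \<noteq> 0"
  shows "cmod (ge C k i j) \<le> growth m C * Max (entry_norms C m)"
  using stage_norm_le_Max[OF assms(1-3)] growth_eq[of m C] assms by simp

lemma growth_le_mult_growth:
  assumes m: "m \<ge> 1"
    and stages: "\<And>k i j. k \<in> {1..m} \<Longrightarrow> i \<in> {k..m} \<Longrightarrow> j \<in> {k..m} \<Longrightarrow>
      cmod (ge A k i j) \<le> Max (stage_norms B m)"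
    and entries: "\<And>i j. i \<in> {1..m} \<Longrightarrow> j \<in> {1..m} \<Longrightarrow> cmod (B i j) \<le> c * Max (entry_norms A m)"
    and pos: "0 < Max (entry_norms B m)"
  shows "growth m A \<le> c * growth m B"
proof -
  let ?sA = "Max (stage_norms A m)" and ?sB = "Max (stage_norms B m)"
    and ?eA = "Max (entry_norms A m)" and ?eB = "Max (entry_norms B m)"
  have eB_le: "?eB \<le> c * ?eA"
    by (rule Max_entry_norms_le[OF m entries])
  have "0 < c * ?eA" using pos eB_le by linarith
  then have c: "0 < c" and eA: "0 < ?eA"
    using Max_entry_norms_nonneg[OF m, of A] by (auto simp: zero_less_mult_iff)
  have "?sA \<le> ?sB"
    by (rule Max_stage_norms_le[OF m stages])
  then have "growth m A \<le> ?sB / ?eA"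
    unfolding growth_eq[OF m] using eA by (simp add: divide_right_mono)
  also have "\<dots> = c * (?sB / (c * ?eA))"
    using c by simp
  also have "\<dots> \<le> c * (?sB / ?eB)"
    using eB_le pos c Max_stage_norms_nonneg[OF m, of B]
    by (intro mult_left_mono divide_left_mono) auto
  finally show ?thesis unfolding growth_eq[OF m] .
qed

lemma gset_upper: "C \<in> X \<Longrightarrow> ereal (growth m C) \<le> gset m X"
  unfolding gset_def by (rule SUP_upper)

lemma gset_nonneg: "C \<in> X \<Longrightarrow> 0 \<le> gset m X"
  by (rule order_trans[OF _ gset_upper]) (auto simp: growth_nonneg)

lemma id_matrix_invertible: "mat_invertible m (id_matrix m)"
  by (subst mat_invertible_iff_pivots_nonzero) (auto simp: elim_defined_def ge_id_matrix id_matrix_def)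

lemma id_matrix_in_CP: "0 \<in> S \<Longrightarrow> 1 \<in> S \<Longrightarrow> id_matrix m \<in> CP m S"
  unfolding CP_def using ge_id_matrix
  by (auto simp: mat_in_def elim_defined_def id_matrix_def id_matrix_invertible)

lemma id_matrix_in_CPeps: "0 \<in> S \<Longrightarrow> 1 \<in> S \<Longrightarrow> (\<And>k. 0 \<le> eps k) \<Longrightarrow> id_matrix m \<in> CPeps m eps S"
  unfolding CPeps_def using ge_id_matrix
  by (auto simp: mat_in_def elim_defined_def id_matrix_def id_matrix_invertible
           intro: add_nonneg_nonneg)

lemma CPeps_pivot_nonzero: "A \<in> CPeps n eps S \<Longrightarrow> k \<in> {1..n} \<Longrightarrow> ge A k k k \<noteq> 0"
  unfolding CPeps_def using mat_invertible_iff_pivots_nonzero by blast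

lemma lead_submatrix_in_CPeps:
  assumes A: "A \<in> CPeps n eps S" and "0 \<in> S" "l \<le> n"
  shows "lead_submatrix l A \<in> CPeps l eps S"
proof -
  have "mat_in n S A" using A by (simp add: CPeps_def)
  then have "mat_in l S (lead_submatrix l A)"
    using assms(2,3) by (auto simp: mat_in_def lead_submatrix_def)
  moreover have "\<forall>k\<in>{1..l}. ge (lead_submatrix l A) k k k \<noteq> 0"
    using CPeps_pivot_nonzero[OF A] assms(3) by (simp add: ge_lead_submatrix)
  moreover have "cmod (ge (lead_submatrix l A) k i j) \<le> (1 + eps k) * cmod (ge (lead_submatrix l A) k k k)"
    if "k \<in> {1..l-1}" "i \<in> {k..l}" "j \<in> {k..l}" "(i, j) \<noteq> (k, k)" for k i j
    using A that assms(3) by (auto simp: CPeps_def ge_lead_submatrix)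
  ultimately show ?thesis
    unfolding CPeps_def using mat_invertible_iff_pivots_nonzero[OF elim_definedI] by (auto intro: elim_definedI)
qed

subsection \<open>Perturbing a matrix of \<open>CP\<^sup>\<epsilon>\<close> into \<open>CP\<close>\<close>

locale CPeps_matrix =
  fixes A :: "nat \<Rightarrow> nat \<Rightarrow> complex" and n :: nat and eps :: real and S :: "complex set"
  assumes n_pos: "n \<ge> 1" and eps_pos: "eps > 0" and S: "S = \<real> \<or> S = UNIV"
    and A_in: "A \<in> CPeps n (\<lambda>_. eps) S"
begin

definition piv :: "nat \<Rightarrow> complex" where
  "piv k = ge A k k k"

text \<open>The \<open>{0}\<close> keeps the maximum well defined when \<open>n = 1\<close>.\<close>
definition max_piv :: real where
  "max_piv = Max ((\<lambda>l. cmod (piv l)) ` {1..n-1} \<union> {0})"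

definition shift :: "nat \<Rightarrow> real" where
  "shift k = eps * (\<Sum>l=k..n-1. cmod (piv l)) + eps * (1 + eps) * max_piv"

definition scale_factor :: "nat \<Rightarrow> real" where
  "scale_factor k = sqrt (1 + shift k / cmod (piv k))"

text \<open>Entry \<open>(i, j)\<close> first leaves the active part at stage \<open>min i j\<close>; the perturbation
  rescales it there.\<close>
definition pert :: "nat \<Rightarrow> nat \<Rightarrow> complex" where
  "pert i j = (if i = j then of_real (scale_factor i ^ 2 - 1) * piv i
     else if i < j then of_real (scale_factor i - 1) * ge A i i j
     else of_real (scale_factor j - 1) * ge A j i j)"

definition B :: "nat \<Rightarrow> nat \<Rightarrow> complex" where
  "B i j = (if i \<in> {1..n} \<and> j \<in> {1..n} then A i j + pert i j else 0)"

lemma A_mat_in: "mat_in n S A"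
  using A_in by (simp add: CPeps_def)

lemma stage_bound:
  "k \<in> {1..n-1} \<Longrightarrow> i \<in> {k..n} \<Longrightarrow> j \<in> {k..n} \<Longrightarrow> (i, j) \<noteq> (k, k) \<Longrightarrow>
    cmod (ge A k i j) \<le> (1 + eps) * cmod (piv k)"
  using A_in by (auto simp: CPeps_def piv_def)

lemma norm_piv_pos: "k \<in> {1..n} \<Longrightarrow> 0 < cmod (piv k)"
  using CPeps_pivot_nonzero[OF A_in] by (simp add: piv_def)

lemma norm_piv_le_max_piv: "l \<in> {1..n-1} \<Longrightarrow> cmod (piv l) \<le> max_piv"
  unfolding max_piv_def by (rule Max_ge) auto

lemma max_piv_nonneg: "0 \<le> max_piv"
  unfolding max_piv_def by (rule Max_ge) auto

lemma shift_nonneg: "0 \<le> shift k"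
  unfolding shift_def using eps_pos max_piv_nonneg
  by (intro add_nonneg_nonneg mult_nonneg_nonneg sum_nonneg) auto

lemma shift_ge_norm_piv:
  assumes "k \<in> {1..n-1}"
  shows "eps * (2 + eps) * cmod (piv k) \<le> shift k"
proof -
  have "cmod (piv k) \<le> (\<Sum>l=k..n-1. cmod (piv l))"
    using assms by (intro member_le_sum) auto
  moreover have "cmod (piv k) \<le> max_piv" using norm_piv_le_max_piv assms .
  ultimately have "eps * cmod (piv k) + eps * (1 + eps) * cmod (piv k) \<le> shift k"
    unfolding shift_def using eps_pos by (intro add_mono mult_left_mono) auto
  then show ?thesis by (simp add: algebra_simps)
qed

lemma shift_decrease:
  assumes "1 \<le> k" "k < m" "m \<le> n"
  shows "eps * cmod (piv k) + shift m \<le> shift k"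
proof -
  have "(\<Sum>l=k..n-1. cmod (piv l)) = cmod (piv k) + (\<Sum>l=Suc k..n-1. cmod (piv l))"
    using assms by (subst sum.atLeast_Suc_atMost) auto
  moreover have "(\<Sum>l=m..n-1. cmod (piv l)) \<le> (\<Sum>l=Suc k..n-1. cmod (piv l))"
    using assms by (intro sum_mono2) auto
  ultimately show ?thesis unfolding shift_def using eps_pos
    by (simp add: algebra_simps mult_left_mono)
qed

lemma shift_le_shift_1:
  assumes "1 \<le> m" "m \<le> n"
  shows "shift m \<le> shift 1"
proof (cases "m = 1")
  case False
  then have "eps * cmod (piv 1) + shift m \<le> shift 1" using assms by (intro shift_decrease) auto
  moreover have "0 \<le> eps * cmod (piv 1)" using eps_pos by simp
  ultimately show ?thesis by linarith
qed simp

lemma scale_factor_ge_1: "1 \<le> scale_factor k"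
  unfolding scale_factor_def using shift_nonneg by simp

lemma scale_factor_sq_mult_norm_piv: "k \<in> {1..n} \<Longrightarrow> scale_factor k ^ 2 * cmod (piv k) = cmod (piv k) + shift k"
  unfolding scale_factor_def using shift_nonneg[of k] norm_piv_pos[of k] by (simp add: field_simps)

lemma scale_factor_ge_1_plus_eps:
  assumes "k \<in> {1..n-1}"
  shows "1 + eps \<le> scale_factor k"
proof -
  have "0 < cmod (piv k)" using norm_piv_pos assms by auto
  then have "(1 + eps) ^ 2 \<le> 1 + shift k / cmod (piv k)"
    using shift_ge_norm_piv[OF assms] by (simp add: field_simps power2_eq_square)
  then show ?thesis
    unfolding scale_factor_def using eps_pos by (simp add: real_le_rsqrt)
qed

lemma ge_B: "1 \<le> k \<Longrightarrow> i \<in> {k..n} \<Longrightarrow> j \<in> {k..n} \<Longrightarrow> ge B k i j = ge A k i j + pert i j"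
proof (induction k arbitrary: i j)
  case (Suc k)
  show ?case
  proof (cases "k = 0")
    case True
    then show ?thesis using Suc.prems by (simp add: B_def)
  next
    case False
    then have k: "1 \<le> k" "k \<in> {k..n}" "k \<in> {1..n}" and "k < i" "k < j" using Suc.prems by auto
    define a where "a = complex_of_real (scale_factor k)"
    have "a \<noteq> 0" using scale_factor_ge_1[of k] by (auto simp: a_def)
    moreover have "piv k \<noteq> 0" using norm_piv_pos[OF k(3)] by auto
    moreover have "ge B k i k = a * ge A k i k" "ge B k k j = a * ge A k k j"
      using Suc.IH[OF k(1) _ k(2)] Suc.IH[OF k(1) k(2)] Suc.prems \<open>k < i\<close> \<open>k < j\<close>
      by (auto simp: pert_def a_def algebra_simps)
    moreover have "ge B k k k = a ^ 2 * piv k"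
      using Suc.IH[OF k(1) k(2) k(2)] by (simp add: pert_def a_def piv_def algebra_simps)
    moreover have "ge B k i j = ge A k i j + pert i j"
      using Suc.IH[OF k(1)] Suc.prems by auto
    ultimately show ?thesis
      by (simp add: ge_Suc[OF k(1)] piv_def field_simps power2_eq_square)
  qed
qed simp

lemma norm_ge_B_pivot: "k \<in> {1..n} \<Longrightarrow> cmod (ge B k k k) = cmod (piv k) + shift k"
  using ge_B[of k k k] scale_factor_sq_mult_norm_piv[of k] scale_factor_ge_1[of k]
  by (simp add: pert_def piv_def algebra_simps norm_mult norm_power)

lemma norm_ge_B_pivot_eq: "k \<in> {1..n} \<Longrightarrow> cmod (ge B k k k) = scale_factor k ^ 2 * cmod (piv k)"
  using norm_ge_B_pivot scale_factor_sq_mult_norm_piv by simp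

lemma scaled_stage_le_B_pivot:
  assumes "k \<in> {1..n-1}" "i \<in> {k..n}" "j \<in> {k..n}" "(i, j) \<noteq> (k, k)"
  shows "scale_factor k * cmod (ge A k i j) \<le> cmod (ge B k k k)"
proof -
  have k: "k \<in> {1..n}" using assms(1) by auto
  have "scale_factor k * cmod (ge A k i j) \<le> scale_factor k * ((1 + eps) * cmod (piv k))"
    using stage_bound[OF assms] scale_factor_ge_1[of k] by (intro mult_left_mono) auto
  also have "\<dots> \<le> scale_factor k * (scale_factor k * cmod (piv k))"
    using scale_factor_ge_1_plus_eps[OF assms(1)] scale_factor_ge_1[of k]
    by (intro mult_left_mono mult_right_mono) auto
  also have "\<dots> = cmod (ge B k k k)"
    using norm_ge_B_pivot_eq[OF k] by (simp add: power2_eq_square)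
  finally show ?thesis .
qed

lemma scaled_stage_le_shift:
  assumes "k \<in> {1..n-1}" "i \<in> {k..n}" "j \<in> {k..n}" "(i, j) \<noteq> (k, k)"
  shows "(scale_factor k - 1) * cmod (ge A k i j) \<le> shift k"
proof -
  have k: "k \<in> {1..n}" using assms(1) by auto
  have "(scale_factor k - 1) * cmod (ge A k i j) \<le> (scale_factor k - 1) * (scale_factor k * cmod (piv k))"
    using scaled_stage_le_B_pivot[OF assms] norm_ge_B_pivot_eq[OF k] scale_factor_ge_1[of k]
    by (intro mult_left_mono) (auto simp: power2_eq_square)
  also have "\<dots> \<le> (scale_factor k ^ 2 - 1) * cmod (piv k)"
    using mult_left_mono[OF scale_factor_ge_1[of k] norm_ge_zero[of "piv k"]]
    by (simp add: power2_eq_square algebra_simps)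
  also have "\<dots> = shift k"
    using scale_factor_sq_mult_norm_piv[OF k] by (simp add: algebra_simps)
  finally show ?thesis .
qed

lemma norm_pert_le_shift:
  assumes "i \<in> {1..n}" "j \<in> {1..n}"
  shows "cmod (pert i j) \<le> shift (min i j)"
proof -
  have norm_scaled: "cmod (complex_of_real (scale_factor k - 1) * z) = (scale_factor k - 1) * cmod z" for k z
    using scale_factor_ge_1[of k] by (simp add: norm_mult del: of_real_diff)
  consider "i = j" | "i < j" | "j < i" by linarith
  then show ?thesis
  proof cases
    case 1
    have "1 \<le> scale_factor i ^ 2" using scale_factor_ge_1[of i] by (simp add: one_le_power)
    then show ?thesis
      using 1 scale_factor_sq_mult_norm_piv[of i] assms
      by (simp add: pert_def norm_mult algebra_simps del: of_real_diff)
  next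
    case 2
    then have "i \<in> {1..n-1}" using assms by auto
    then show ?thesis
      using 2 scaled_stage_le_shift[of i i j] assms by (simp add: pert_def norm_scaled del: of_real_diff)
  next
    case 3
    then have "j \<in> {1..n-1}" using assms by auto
    then show ?thesis
      using 3 scaled_stage_le_shift[of j i j] assms by (simp add: pert_def norm_scaled del: of_real_diff)
  qed
qed

lemma B_stage_le_pivot:
  assumes k: "k \<in> {1..n}" and i: "i \<in> {k..n}" and j: "j \<in> {k..n}"
  shows "cmod (ge B k i j) \<le> cmod (ge B k k k)"
proof -
  have norm_scaled: "cmod (complex_of_real (scale_factor k) * z) = scale_factor k * cmod z" for z
    using scale_factor_ge_1[of k] by (simp add: norm_mult)
  consider "i = k" "j = k" | "i = k" "j > k" | "i > k" "j = k" | "i > k" "j > k"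
    using i j by fastforce
  then show ?thesis
  proof cases
    case 2
    then have "ge B k i j = of_real (scale_factor k) * ge A k k j"
      using ge_B[of k k j] j k by (simp add: pert_def algebra_simps)
    then show ?thesis using scaled_stage_le_B_pivot[of k k j] 2 k j by (simp add: norm_scaled)
  next
    case 3
    then have "ge B k i j = of_real (scale_factor k) * ge A k i k"
      using ge_B[of k i k] i k by (simp add: pert_def algebra_simps)
    then show ?thesis using scaled_stage_le_B_pivot[of k i k] 3 k i by (simp add: norm_scaled)
  next
    case 4
    then have kk: "k \<in> {1..n-1}" using k i by auto
    have "cmod (ge B k i j) \<le> cmod (ge A k i j) + cmod (pert i j)"
      using ge_B[of k i j] k i j norm_triangle_ineq by simp
    also have "\<dots> \<le> (1 + eps) * cmod (piv k) + shift (min i j)"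
      using stage_bound[OF kk i j] norm_pert_le_shift[of i j] 4 k i j by (intro add_mono) auto
    also have "\<dots> \<le> cmod (piv k) + shift k"
      using shift_decrease[of k "min i j"] 4 k i j by (auto simp: algebra_simps)
    finally show ?thesis using norm_ge_B_pivot[OF k] by simp
  qed simp
qed

lemma B_in_CP: "B \<in> CP n S"
proof -
  have pivots: "ge B k k k \<noteq> 0" if "k \<in> {1..n}" for k
  proof -
    have "0 < cmod (piv k) + shift k" using norm_piv_pos[OF that] shift_nonneg[of k] by linarith
    then show ?thesis using norm_ge_B_pivot[OF that] by auto
  qed
  have "mat_in n S B"
    using S
  proof
    assume S: "S = \<real>"
    have "A i j \<in> \<real>" for i j using mat_in_entry[OF A_mat_in] S by simp
    then have "pert i j \<in> \<real>" for i j
      using ge_in_Reals[of A] by (auto simp: pert_def piv_def)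
    with \<open>\<And>i j. A i j \<in> \<real>\<close> show ?thesis by (auto simp: S mat_in_def B_def)
  qed (simp add: mat_in_def B_def)
  moreover have "elim_defined n B" by (rule elim_definedI) (rule pivots)
  ultimately show ?thesis
    unfolding CP_def using pivots B_stage_le_pivot mat_invertible_iff_pivots_nonzero by auto
qed

lemma A_stage_le_B_pivot:
  assumes k: "k \<in> {1..n}" and "i \<in> {k..n}" "j \<in> {k..n}"
  shows "cmod (ge A k i j) \<le> cmod (ge B k k k)"
proof (cases "(i, j) = (k, k)")
  case True
  then show ?thesis using norm_ge_B_pivot[OF k] shift_nonneg[of k] by (simp add: piv_def)
next
  case False
  then have kk: "k \<in> {1..n-1}" using assms by auto
  have "cmod (ge A k i j) \<le> (1 + eps) * cmod (piv k)"
    by (rule stage_bound[OF kk assms(2,3) False])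
  also have "\<dots> \<le> cmod (piv k) + eps * (2 + eps) * cmod (piv k)"
    using eps_pos by (simp add: algebra_simps mult_right_mono)
  also have "\<dots> \<le> cmod (ge B k k k)"
    using shift_ge_norm_piv[OF kk] norm_ge_B_pivot[OF k] by simp
  finally show ?thesis .
qed

definition max_entry :: real where
  "max_entry = Max (entry_norms A n)"

lemma max_entry_nonneg: "0 \<le> max_entry"
  unfolding max_entry_def by (rule Max_entry_norms_nonneg[OF n_pos])

definition lead_growth :: "nat \<Rightarrow> real" where
  "lead_growth l = growth l (lead_submatrix l A)"

lemma norm_piv_le_lead_growth:
  assumes "1 \<le> k" "k \<le> l" "l \<le> n"
  shows "cmod (piv k) \<le> lead_growth l * max_entry"
proof -
  have l: "l \<ge> 1" using assms by simp
  have "0 < cmod (lead_submatrix l A 1 1)"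
    using norm_piv_pos[of 1] assms by (simp add: lead_submatrix_def piv_def)
  also have "\<dots> \<le> Max (entry_norms (lead_submatrix l A) l)"
    using l by (intro entry_norm_le_Max) auto
  finally have lead_pos: "0 < Max (entry_norms (lead_submatrix l A) l)" .
  have lead_le: "Max (entry_norms (lead_submatrix l A) l) \<le> max_entry"
    using l assms unfolding max_entry_def
    by (intro Max_entry_norms_le) (auto simp: lead_submatrix_def intro!: entry_norm_le_Max)
  have "cmod (piv k) = cmod (ge (lead_submatrix l A) k k k)"
    using assms by (simp add: ge_lead_submatrix piv_def)
  also have "\<dots> \<le> lead_growth l * Max (entry_norms (lead_submatrix l A) l)"
    unfolding lead_growth_def using assms lead_pos by (intro stage_norm_le_growth) auto
  also have "\<dots> \<le> lead_growth l * max_entry"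
    unfolding lead_growth_def using lead_le by (intro mult_left_mono growth_nonneg)
  finally show ?thesis .
qed

definition bound :: real where
  "bound = 1 + eps * (2 + eps) * lead_growth (n - 1) + eps * (\<Sum>i=1..n-2. lead_growth i)"

lemma shift_1_le: "shift 1 \<le> (bound - 1) * max_entry"
proof -
  have max_piv_le: "max_piv \<le> lead_growth (n - 1) * max_entry"
    unfolding max_piv_def lead_growth_def max_entry_def
    using norm_piv_le_lead_growth[of _ "n - 1"] growth_nonneg Max_entry_norms_nonneg[OF n_pos]
    by (subst Max_le_iff) (auto simp: lead_growth_def max_entry_def)
  have sum_le: "(\<Sum>l=1..n-1. cmod (piv l)) \<le> ((\<Sum>l=1..n-2. lead_growth l) + lead_growth (n - 1)) * max_entry"
  proof (cases "n = 1")
    case True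
    then show ?thesis
      using max_entry_nonneg by (simp add: lead_growth_def growth_def)
  next
    case False
    then have "n - 1 = Suc (n - 2)" using n_pos by simp
    then have "(\<Sum>l=1..n-1. lead_growth l * max_entry) = ((\<Sum>l=1..n-2. lead_growth l) + lead_growth (n - 1)) * max_entry"
      by (simp add: sum_distrib_right distrib_right)
    moreover have "(\<Sum>l=1..n-1. cmod (piv l)) \<le> (\<Sum>l=1..n-1. lead_growth l * max_entry)"
      using norm_piv_le_lead_growth by (intro sum_mono) auto
    ultimately show ?thesis by simp
  qed
  have "shift 1 = eps * (\<Sum>l=1..n-1. cmod (piv l)) + eps * (1 + eps) * max_piv"
    by (simp add: shift_def)
  also have "\<dots> \<le> eps * (((\<Sum>l=1..n-2. lead_growth l) + lead_growth (n - 1)) * max_entry)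
      + eps * (1 + eps) * (lead_growth (n - 1) * max_entry)"
    using sum_le max_piv_le eps_pos by (intro add_mono mult_left_mono) auto
  also have "\<dots> = (bound - 1) * max_entry"
    by (simp add: bound_def algebra_simps)
  finally show ?thesis .
qed

lemma growth_le_bound_mult_growth_B: "growth n A \<le> bound * growth n B"
proof (rule growth_le_mult_growth[OF n_pos])
  fix k i j assume k: "k \<in> {1..n}" and "i \<in> {k..n}" "j \<in> {k..n}"
  then show "cmod (ge A k i j) \<le> Max (stage_norms B n)"
    using order_trans[OF A_stage_le_B_pivot stage_norm_le_Max[of k n k k B]] by auto
next
  fix i j assume ij: "i \<in> {1..n}" "j \<in> {1..n}"
  have "cmod (B i j) \<le> cmod (A i j) + cmod (pert i j)"
    using ij norm_triangle_ineq by (simp add: B_def)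
  also have "\<dots> \<le> max_entry + shift 1"
  proof (rule add_mono)
    show "cmod (A i j) \<le> max_entry"
      unfolding max_entry_def by (rule entry_norm_le_Max[OF ij])
    have "shift (min i j) \<le> shift 1" using ij by (intro shift_le_shift_1) auto
    then show "cmod (pert i j) \<le> shift 1" using norm_pert_le_shift[OF ij] by linarith
  qed
  also have "\<dots> \<le> bound * max_entry"
    using shift_1_le by (simp add: algebra_simps)
  finally show "cmod (B i j) \<le> bound * Max (entry_norms A n)"
    by (simp add: max_entry_def)
next
  have "0 < cmod (piv 1)" using n_pos by (intro norm_piv_pos) auto
  then have "0 < cmod (ge B 1 1 1)"
    using norm_ge_B_pivot[of 1] shift_nonneg[of 1] n_pos by (simp add: add_pos_nonneg del: zero_less_norm_iff)
  also have "\<dots> \<le> Max (entry_norms B n)"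
    using n_pos by (simp add: entry_norm_le_Max)
  finally show "0 < Max (entry_norms B n)" .
qed

end

lemma CPeps_growth_le_CP_growth:
  assumes "A \<in> CPeps n (\<lambda>_. eps) S" "S = \<real> \<or> S = UNIV" "eps > 0" "n \<ge> 1"
  shows "\<exists>B\<in>CP n S. growth n A \<le>
    (1 + eps * (2 + eps) * growth (n - 1) (lead_submatrix (n - 1) A)
       + eps * (\<Sum>i=1..n-2. growth i (lead_submatrix i A))) * growth n B"
proof -
  interpret CPeps_matrix A n eps S
    using assms by unfold_locales auto
  show ?thesis
    using B_in_CP growth_le_bound_mult_growth_B by (auto simp: bound_def lead_growth_def)
qed

lemma growth_CPeps_le_mult_gset_CP:
  assumes A: "A \<in> CPeps n (\<lambda>_. eps) S" and S: "S = \<real> \<or> S = UNIV" and "eps > 0" "n \<ge> 1"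
  shows "ereal (growth n A) \<le>
    (1 + ereal (eps * (2 + eps)) * gset (n - 1) (CPeps (n - 1) (\<lambda>_. eps) S)
       + ereal eps * (\<Sum>i=1..n-2. gset i (CPeps i (\<lambda>_. eps) S))) * gset n (CP n S)"
    (is "_ \<le> ?D * _")
proof -
  have S01: "0 \<in> S" "1 \<in> S" using S by auto
  define c where "c = 1 + eps * (2 + eps) * growth (n - 1) (lead_submatrix (n - 1) A)
    + eps * (\<Sum>i=1..n-2. growth i (lead_submatrix i A))"
  obtain B where B: "B \<in> CP n S" and "growth n A \<le> c * growth n B"
    using CPeps_growth_le_CP_growth[OF assms] unfolding c_def by blast
  then have "ereal (growth n A) \<le> ereal c * ereal (growth n B)"
    by simp
  also have "\<dots> \<le> ?D * gset n (CP n S)"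
  proof (rule ereal_mult_mono)
    have "ereal c = 1 + ereal (eps * (2 + eps)) * ereal (growth (n - 1) (lead_submatrix (n - 1) A))
        + ereal eps * (\<Sum>i=1..n-2. ereal (growth i (lead_submatrix i A)))"
      by (simp add: c_def)
    also have "\<dots> \<le> ?D"
      using \<open>eps > 0\<close> A S01
      by (intro add_mono order_refl ereal_mult_left_mono sum_mono gset_upper lead_submatrix_in_CPeps)
         auto
    finally show "ereal c \<le> ?D" .
    have "0 \<le> c"
      unfolding c_def using \<open>eps > 0\<close> growth_nonneg
      by (intro add_nonneg_nonneg mult_nonneg_nonneg sum_nonneg) auto
    then have "0 \<le> ereal c" by simp
    then show "0 \<le> ?D" using \<open>ereal c \<le> ?D\<close> by (rule order_trans)
  qed (use growth_nonneg gset_upper[OF B] in auto)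
  finally show ?thesis .
qed

lemma ereal_divide_le_of_le_mult:
  fixes a c d :: ereal
  assumes "a \<le> d * c" "1 \<le> d" "0 \<le> c"
  shows "a / d \<le> c"
proof (cases "d = \<infinity>")
  case False
  have "0 < d" using assms(2) by (rule less_le_trans[rotated]) simp
  then show ?thesis using False assms(1) by (simp add: ereal_divide_le_pos mult.commute)
qed (use assms(3) in simp)

theorem mainTheorem4:
  fixes S :: "complex set" and \<epsilon> :: real and n :: nat
  assumes "S = \<real> \<or> S = UNIV"
    and "\<epsilon> > 0"
    and "n \<ge> 1"
  shows "gset n (CP n S) \<ge>
    gset n (CPeps n (\<lambda>_. \<epsilon>) S) /
      (1 + ereal (\<epsilon> * (2 + \<epsilon>)) * gset (n - 1) (CPeps (n - 1) (\<lambda>_. \<epsilon>) S)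
         + ereal \<epsilon> * (\<Sum>i=1..n-2. gset i (CPeps i (\<lambda>_. \<epsilon>) S)))"
    (is "_ \<ge> _ / ?D")
proof (rule ereal_divide_le_of_le_mult)
  have S01: "0 \<in> S" "1 \<in> S" using assms(1) by auto
  have "0 \<le> gset i (CPeps i (\<lambda>_. \<epsilon>) S)" for i
    using assms(2) by (intro gset_nonneg[OF id_matrix_in_CPeps[OF S01]]) simp
  then show "1 \<le> ?D"
    using assms(2) by (simp add: add_increasing2 sum_nonneg)
  show "gset n (CPeps n (\<lambda>_. \<epsilon>) S) \<le> ?D * gset n (CP n S)"
    unfolding gset_def[of n "CPeps n (\<lambda>_. \<epsilon>) S"]
    using growth_CPeps_le_mult_gset_CP[OF _ assms] by (rule SUP_least)
  show "0 \<le> gset n (CP n S)"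
    by (rule gset_nonneg[OF id_matrix_in_CP[OF S01]])
qed

end
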